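(* For every integer $n>1$ there is a set $S$ of $n$ points in the plane $\mathbb{R}^2$ in convex position such that every Steiner tree $T$ on $S$ has dilation (with respect to $S$) at least $\frac{1}{\sin(\pi/n)}$, and $\frac{1}{\sin(\pi/n)} > \frac{n}{\pi}$.
   Context: A set of points is in convex position if all of them lie on the boundary of their convex hull. A Steiner tree on a finite set $S\subset\mathbb{R}^2$ is a tree $T$ whose vertex set is a finite subset of $\mathbb{R}^2$ containing $S$ (vertices not in $S$ are Steiner points; their number and positions are arbitrary). Each edge $(u,v)$ is realized as the straight segment $uv$ and has weight equal to the Euclidean distance $d(u,v)$; edges may cross or overlap. $d_T(u,v)$ denotes the length of the (unique) path in $T$ between $u$ and $v$. The dilation of $T$ with respect to $S$ is $\max_{u,v\in S,\,u\neq v} d_T(u,v)/d(u,v)$. *)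

theory Defs
  imports "HOL-Analysis.Analysis"
begin

type_synonym pt = "real ^ 2"

definition convex_position :: "pt set \<Rightarrow> bool" where
  "convex_position S \<longleftrightarrow> S \<subseteq> frontier (convex hull S)"

definition is_walk :: "pt set set \<Rightarrow> pt list \<Rightarrow> bool" where
  "is_walk E p \<longleftrightarrow> p \<noteq> [] \<and> (\<forall>(a, b) \<in> set (zip p (tl p)). {a, b} \<in> E)"

definition walk_weight :: "pt list \<Rightarrow> real" where
  "walk_weight p = sum_list (map (\<lambda>(a, b). dist a b) (zip p (tl p)))"

definition is_tree :: "pt set \<Rightarrow> pt set set \<Rightarrow> bool" where
  "is_tree V E \<longleftrightarrow>
     finite V \<and> V \<noteq> {} \<and>
     E \<subseteq> {{u, v} | u v. u \<in> V \<and> v \<in> V \<and> u \<noteq> v} \<and>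
     (\<forall>u\<in>V. \<forall>v\<in>V. \<exists>p. is_walk E p \<and> hd p = u \<and> last p = v) \<and>
     \<not> (\<exists>c. is_walk E c \<and> distinct c \<and> length c \<ge> 3 \<and> {last c, hd c} \<in> E)"

definition steiner_tree :: "pt set \<Rightarrow> pt set \<Rightarrow> pt set set \<Rightarrow> bool" where
  "steiner_tree S V E \<longleftrightarrow> is_tree V E \<and> S \<subseteq> V"

definition tree_dist :: "pt set set \<Rightarrow> pt \<Rightarrow> pt \<Rightarrow> real" where
  "tree_dist E u v = Inf {walk_weight p | p. is_walk E p \<and> distinct p \<and> hd p = u \<and> last p = v}"

definition dilation :: "pt set \<Rightarrow> pt set set \<Rightarrow> real" where
  "dilation S E = Sup {tree_dist E u v / dist u v | u v. u \<in> S \<and> v \<in> S \<and> u \<noteq> v}"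

end

theory Submission
  imports Defs
begin

(* The witness is the regular n-gon p_j = (cos (2 pi j / n), sin (2 pi j / n)) inscribed in
   the unit circle. Every tree T containing it has a vertex x such that each branch of T at x
   (component of T - x) contains at most n/2 of the p_j. Hence among any n div 2 consecutive
   sides p_j p_(j+1) there is one whose endpoints lie in different branches, so the tree path
   between them passes through x. Such a run of sides covers a half-turn of midpoint directions,
   so some separated side has midpoint direction m with <m, x> <= 0; for unit vectors p, q with
   <p + q, x> <= 0 one has |p - x| + |x - q| >= 2, while the side has length 2 sin (pi / n).
   Finally sin t < t gives 1 / sin (pi / n) > n / pi. *)

section \<open>Walks\<close>

fun adj_pairs :: "'a list \<Rightarrow> ('a \<times> 'a) list" where
  "adj_pairs (a # b # r) = (a, b) # adj_pairs (b # r)"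
| "adj_pairs _ = []"

lemma zip_tl_eq_adj_pairs: "zip xs (tl xs) = adj_pairs xs"
  by (induction xs rule: adj_pairs.induct) auto

lemma adj_pairs_append: "adj_pairs (xs @ y # zs) = adj_pairs (xs @ [y]) @ adj_pairs (y # zs)"
  by (induction xs rule: adj_pairs.induct) simp_all

lemma adj_pairs_snoc: "xs \<noteq> [] \<Longrightarrow> adj_pairs (xs @ [y]) = adj_pairs xs @ [(last xs, y)]"
  by (induction xs rule: adj_pairs.induct) auto

lemma adj_pairs_rev: "adj_pairs (rev xs) = rev (map prod.swap (adj_pairs xs))"
proof (induction xs rule: adj_pairs.induct)
  case (1 a b r)
  have "adj_pairs (rev (a # b # r)) = adj_pairs (rev (b # r) @ [a])" by simp
  also have "\<dots> = adj_pairs (rev (b # r)) @ [(b, a)]"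
    using adj_pairs_snoc[of "rev (b # r)" a] by (simp add: last_rev del: rev.simps)
  finally show ?case using 1 by simp
qed auto

lemma adj_pairs_append_tl:
  assumes "xs \<noteq> []" "ys \<noteq> []" "last xs = hd ys"
  shows "adj_pairs (xs @ tl ys) = adj_pairs xs @ adj_pairs ys"
proof -
  obtain y zs where ys: "ys = y # zs" using assms(2) by (cases ys) auto
  obtain xs' where "xs = xs' @ [y]"
    using assms ys by (metis append_butlast_last_id list.sel(1))
  then show ?thesis using ys adj_pairs_append[of xs' y zs] by simp
qed

lemma last_append_tl: "ys \<noteq> [] \<Longrightarrow> last xs = hd ys \<Longrightarrow> last (xs @ tl ys) = last ys"
  by (cases ys) auto

lemma set_adj_pairs_subset: "set (adj_pairs xs) \<subseteq> set xs \<times> set xs"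
  by (induction xs rule: adj_pairs.induct) auto

lemma adj_pairs_map: "adj_pairs (map f xs) = map (map_prod f f) (adj_pairs xs)"
  by (induction xs rule: adj_pairs.induct) auto

lemma set_adj_pairs_upt: "set (adj_pairs [0..<k]) = {(m, Suc m) | m. Suc m < k}"
proof (induction k)
  case (Suc k)
  show ?case
  proof (cases k)
    case (Suc k')
    then show ?thesis using Suc.IH adj_pairs_snoc[of "[0..<k]" k] by auto
  qed simp
qed simp

lemma is_walk_iff_adj_pairs:
  "is_walk E w \<longleftrightarrow> w \<noteq> [] \<and> (\<forall>(a, b)\<in>set (adj_pairs w). {a, b} \<in> E)"
  unfolding is_walk_def zip_tl_eq_adj_pairs ..

lemma walk_weight_eq: "walk_weight w = (\<Sum>(a, b)\<leftarrow>adj_pairs w. dist a b)"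
  unfolding walk_weight_def zip_tl_eq_adj_pairs ..

lemma is_walk_rev: "is_walk E w \<Longrightarrow> is_walk E (rev w)"
  unfolding is_walk_iff_adj_pairs adj_pairs_rev by (auto simp: insert_commute)

lemma is_walk_append_tl:
  "is_walk E w \<Longrightarrow> is_walk E w' \<Longrightarrow> last w = hd w' \<Longrightarrow> is_walk E (w @ tl w')"
  unfolding is_walk_iff_adj_pairs by (auto simp add: adj_pairs_append_tl)

lemma distinct_subwalk:
  assumes "w \<noteq> []"
  obtains w' where "distinct w'" "w' \<noteq> []" "hd w' = hd w" "last w' = last w"
    "set (adj_pairs w') \<subseteq> set (adj_pairs w)"
  using assms
proof (induction "length w" arbitrary: w rule: less_induct)
  case less
  show ?case
  proof (cases "distinct w")
    case False
    then obtain xs ys zs y where w: "w = xs @ [y] @ ys @ [y] @ zs"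
      using not_distinct_decomp by blast
    let ?v = "xs @ [y] @ zs"
    have "hd ?v = hd w" "last ?v = last w" using w by (cases xs; cases zs; simp)+
    moreover have "set (adj_pairs ?v) \<subseteq> set (adj_pairs w)"
      using w adj_pairs_append[of xs y zs] adj_pairs_append[of xs y "ys @ [y] @ zs"]
        adj_pairs_append[of "y # ys" y zs] by auto
    moreover have "length ?v < length w" using w by simp
    ultimately show ?thesis
      using less(1)[of ?v] less(2) by (metis Nil_is_append_conv not_Cons_self2 order.trans)
  qed (use less in blast)
qed

lemma is_walk_shortcut:
  assumes "is_walk E w"
  obtains w' where "is_walk E w'" "distinct w'" "hd w' = hd w" "last w' = last w"
    "set (adj_pairs w') \<subseteq> set (adj_pairs w)"
proof -
  have "w \<noteq> []" using assms unfolding is_walk_def by blast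
  then obtain w' where w': "distinct w'" "w' \<noteq> []" "hd w' = hd w" "last w' = last w"
    "set (adj_pairs w') \<subseteq> set (adj_pairs w)"
    by (rule distinct_subwalk)
  moreover have "is_walk E w'" using w' assms unfolding is_walk_iff_adj_pairs by blast
  ultimately show thesis using that by blast
qed

lemma walk_weight_ge_dist: "w \<noteq> [] \<Longrightarrow> dist (hd w) (last w) \<le> walk_weight w"
proof (induction w rule: adj_pairs.induct)
  case (1 a b r)
  then show ?case
    using dist_triangle[of a "last (b # r)" b] by (auto simp: walk_weight_eq)
qed (auto simp: walk_weight_eq)

lemma walk_weight_ge_via:
  assumes "x \<in> set w"
  shows "dist (hd w) x + dist x (last w) \<le> walk_weight w"
proof -
  obtain as bs where w: "w = as @ x # bs" using assms split_list by metis
  have "walk_weight w = walk_weight (as @ [x]) + walk_weight (x # bs)"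
    using adj_pairs_append[of as x bs] unfolding walk_weight_eq w by simp
  moreover have "dist (hd w) x \<le> walk_weight (as @ [x])"
    using walk_weight_ge_dist[of "as @ [x]"] w by (cases as) auto
  moreover have "dist x (last w) \<le> walk_weight (x # bs)"
    using walk_weight_ge_dist[of "x # bs"] w by (cases bs) auto
  ultimately show ?thesis by simp
qed

section \<open>Branches and the centroid of a tree\<close>

definition branch :: "pt set set \<Rightarrow> pt \<Rightarrow> pt \<Rightarrow> pt set" where
  "branch E x v = {u. \<exists>w. is_walk E w \<and> hd w = u \<and> last w = v \<and> x \<notin> set w}"

lemma branch_at_self: "branch E x x = {}"
  unfolding branch_def is_walk_def by auto

lemma branch_sym: "u \<in> branch E x v \<Longrightarrow> v \<in> branch E x u"
proof -
  assume "u \<in> branch E x v"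
  then obtain w where w: "is_walk E w" "hd w = u" "last w = v" "x \<notin> set w"
    unfolding branch_def by blast
  then have "w \<noteq> []" unfolding is_walk_def by blast
  with w show ?thesis
    unfolding branch_def by (intro CollectI exI[of _ "rev w"]) (simp add: is_walk_rev hd_rev last_rev)
qed

lemma branch_trans: "u \<in> branch E x v \<Longrightarrow> v \<in> branch E x v' \<Longrightarrow> u \<in> branch E x v'"
proof -
  assume "u \<in> branch E x v" "v \<in> branch E x v'"
  then obtain w w' where w: "is_walk E w" "hd w = u" "last w = v" "x \<notin> set w"
    and w': "is_walk E w'" "hd w' = v" "last w' = v'" "x \<notin> set w'"
    unfolding branch_def by blast
  have ne: "w \<noteq> []" "w' \<noteq> []" using w w' unfolding is_walk_def by auto
  have "set (tl w') \<subseteq> set w'" by (cases w') auto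
  then have "x \<notin> set (w @ tl w')" using w w' by auto
  with w w' ne show ?thesis
    unfolding branch_def by (intro CollectI exI[of _ "w @ tl w'"]) (simp add: is_walk_append_tl last_append_tl)
qed

lemma tree_edge_ne: "is_tree V E \<Longrightarrow> {u, v} \<in> E \<Longrightarrow> u \<noteq> v"
  unfolding is_tree_def by (auto simp: doubleton_eq_iff)

lemma tree_edge_in_vertices: "is_tree V E \<Longrightarrow> {u, v} \<in> E \<Longrightarrow> v \<in> V"
  unfolding is_tree_def by (auto simp: doubleton_eq_iff)

lemma tree_no_cycle:
  assumes "is_tree V E" "is_walk E c" "distinct c" "length c \<ge> 3" "{last c, hd c} \<in> E"
  shows False
  using assms unfolding is_tree_def by (metis (no_types, lifting))

lemma tree_edge_branches_disjoint:
  assumes tree: "is_tree V E" and e: "{y, z} \<in> E"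
  shows "branch E z y \<inter> branch E y z = {}"
proof (rule ccontr)
  assume "branch E z y \<inter> branch E y z \<noteq> {}"
  then obtain p w1 w2 where w1: "is_walk E w1" "hd w1 = p" "last w1 = y" "z \<notin> set w1"
    and w2: "is_walk E w2" "hd w2 = p" "last w2 = z" "y \<notin> set w2"
    unfolding branch_def by blast
  have ne: "w1 \<noteq> []" "w2 \<noteq> []" using w1 w2 unfolding is_walk_def by auto
  let ?w = "rev w1 @ tl w2"
  have pairs: "adj_pairs ?w = adj_pairs (rev w1) @ adj_pairs w2"
    using adj_pairs_append_tl[of "rev w1" w2] ne w1 w2 by (simp add: last_rev)
  have "is_walk E ?w" using w1 w2 ne by (simp add: is_walk_append_tl is_walk_rev last_rev)
  moreover have "?w \<noteq> []" "hd ?w = y" "last ?w = z"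
    using ne w1 w2 by (auto simp: hd_rev last_rev last_append_tl)
  ultimately obtain c where c: "is_walk E c" "distinct c" "hd c = y" "last c = z"
    "set (adj_pairs c) \<subseteq> set (adj_pairs ?w)"
    by (metis is_walk_shortcut)
  have "(y, z) \<notin> set (adj_pairs ?w)"
    using pairs set_adj_pairs_subset[of "rev w1"] set_adj_pairs_subset[of w2] w1 w2 by auto
  then have "c \<noteq> [y, z]" using c by (metis adj_pairs.simps(1) list.set_intros(1) subsetD)
  moreover have "y \<noteq> z" using tree e by (rule tree_edge_ne)
  moreover have "c \<noteq> []" using c(1) unfolding is_walk_def by blast
  ultimately have "length c \<ge> 3"
    using c by (cases c; cases "tl c"; cases "tl (tl c)") auto
  moreover have "{last c, hd c} \<in> E" using c e by (simp add: insert_commute)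
  ultimately show False using tree_no_cycle[OF tree] c by blast
qed

lemma branch_subset_neighbour_branch:
  assumes tree: "is_tree V E" and "x \<in> V" "p \<in> V" "p \<noteq> x"
  obtains y where "{x, y} \<in> E" "branch E x p \<subseteq> branch E x y"
proof -
  obtain w where w: "is_walk E w" "hd w = p" "last w = x"
    using tree assms unfolding is_tree_def by blast
  then have "x \<in> set w" unfolding is_walk_def by auto
  then obtain as bs where w_split: "w = as @ x # bs" "x \<notin> set as"
    by (meson split_list_first)
  have as: "as \<noteq> []" using w w_split \<open>p \<noteq> x\<close> by auto
  have "adj_pairs w = adj_pairs as @ [(last as, x)] @ adj_pairs (x # bs)"
    using w_split adj_pairs_append[of as x bs] adj_pairs_snoc[OF as] by simp
  then have edge: "{last as, x} \<in> E" and "is_walk E as"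
    using w as unfolding is_walk_iff_adj_pairs by auto
  then have "p \<in> branch E x (last as)"
    using w w_split as unfolding branch_def by auto
  then have "branch E x p \<subseteq> branch E x (last as)"
    using branch_trans by blast
  with edge show thesis by (intro that) (simp_all add: insert_commute)
qed

lemma finite_self_map_cycle:
  assumes "finite V" "x\<^sub>0 \<in> V" "f ` V \<subseteq> V"
  obtains x k where "x \<in> V" "0 < k" "(f ^^ k) x = x" "inj_on (\<lambda>m. (f ^^ m) x) {..<k}"
proof -
  define s where "s m = (f ^^ m) x\<^sub>0" for m
  have s_in: "s m \<in> V" for m
    by (induction m) (use assms in \<open>auto simp: s_def\<close>)
  have "\<not> inj s"
    using s_in finite_subset[OF _ \<open>finite V\<close>] finite_imageD[of s UNIV] by blast
  then have "\<exists>j. \<exists>i<j. s i = s j"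
    unfolding inj_def by (metis linorder_neqE_nat)
  then obtain j where "\<exists>i<j. s i = s j" and j_least: "\<And>j'. j' < j \<Longrightarrow> \<not> (\<exists>i<j'. s i = s j')"
    using exists_least_iff[of "\<lambda>j. \<exists>i<j. s i = s j"] by blast
  then obtain i where ij: "i < j" "s i = s j" by blast
  have s_shift: "(f ^^ m) (s i) = s (m + i)" for m
    by (simp add: s_def funpow_add)
  have "inj_on s {..<j}"
    unfolding inj_on_def by (metis lessThan_iff j_least linorder_neqE_nat)
  then have "inj_on (\<lambda>m. (f ^^ m) (s i)) {..<j - i}"
    unfolding s_shift by (fastforce simp: inj_on_def less_diff_conv)
  moreover have "(f ^^ (j - i)) (s i) = s (j - i + i)" by (rule s_shift)
  then have "(f ^^ (j - i)) (s i) = s i" using ij by simp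
  ultimately show thesis
    using ij s_in by (intro that) auto
qed

(* If every vertex x had a branch with more than half of S, choosing a neighbour f x inside it
   gives a self-map of V along edges. A periodic orbit of f is either a loop, or an edge x y
   whose two heavy branches (at x towards y and at y towards x) must meet, or a cycle. *)
lemma tree_centroid:
  assumes tree: "is_tree V E" and "S \<subseteq> V"
  shows "\<exists>x\<in>V. \<forall>p\<in>V. 2 * card (S \<inter> branch E x p) \<le> card S"
proof (rule ccontr)
  have "finite V" "V \<noteq> {}" using tree unfolding is_tree_def by auto
  then have "finite S" using \<open>S \<subseteq> V\<close> finite_subset by blast
  define heavy where "heavy x y \<longleftrightarrow> card S < 2 * card (S \<inter> branch E x y)" for x y
  assume no_centroid: "\<not> ?thesis"
  then have "\<forall>x\<in>V. \<exists>y. {x, y} \<in> E \<and> heavy x y"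
  proof (intro ballI)
    fix x assume "x \<in> V"
    with no_centroid obtain p where "p \<in> V" "heavy x p"
      unfolding heavy_def by (auto simp: not_le)
    then have "p \<noteq> x" unfolding heavy_def by (auto simp: branch_at_self)
    then obtain y where "{x, y} \<in> E" "branch E x p \<subseteq> branch E x y"
      using branch_subset_neighbour_branch[OF tree \<open>x \<in> V\<close> \<open>p \<in> V\<close>] by blast
    moreover have "card (S \<inter> branch E x p) \<le> card (S \<inter> branch E x y)"
      using calculation \<open>finite S\<close> by (intro card_mono) auto
    ultimately show "\<exists>y. {x, y} \<in> E \<and> heavy x y"
      using \<open>heavy x p\<close> unfolding heavy_def by auto
  qed
  then obtain f where f: "\<And>x. x \<in> V \<Longrightarrow> {x, f x} \<in> E \<and> heavy x (f x)"
    by metis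
  then have f_V: "f ` V \<subseteq> V" using tree_edge_in_vertices[OF tree] by blast
  obtain x k where x: "x \<in> V" "0 < k" "(f ^^ k) x = x" and inj: "inj_on (\<lambda>m. (f ^^ m) x) {..<k}"
    using finite_self_map_cycle[OF \<open>finite V\<close> _ f_V] \<open>V \<noteq> {}\<close> by blast
  have orbit_V: "(f ^^ m) x \<in> V" for m
    by (induction m) (use x f_V in auto)
  consider "k = 1" | "k = 2" | "k \<ge> 3" using \<open>0 < k\<close> by linarith
  then show False
  proof cases
    case 1
    then show False using f[OF \<open>x \<in> V\<close>] x tree_edge_ne[OF tree, of x x] by simp
  next
    case 2
    define y where "y = f x"
    have "f y = x" using x 2 by (simp add: y_def numeral_2_eq_2)
    have "heavy x y" "heavy y x" "{x, y} \<in> E"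
      using f[OF \<open>x \<in> V\<close>] f[of y] orbit_V[of 1] \<open>f y = x\<close> by (auto simp: y_def)
    then have "S \<inter> branch E x y \<inter> (S \<inter> branch E y x) \<noteq> {}"
      unfolding heavy_def using card_Un_disjoint[of "S \<inter> branch E x y" "S \<inter> branch E y x"]
        card_mono[OF \<open>finite S\<close>, of "S \<inter> branch E x y \<union> S \<inter> branch E y x"] \<open>finite S\<close>
      by auto
    then show False
      using tree_edge_branches_disjoint[OF tree \<open>{x, y} \<in> E\<close>] by blast
  next
    case 3
    define c where "c = map (\<lambda>m. (f ^^ m) x) [0..<k]"
    have "distinct c" using inj by (simp add: c_def distinct_map atLeast_upt)
    moreover have "length c \<ge> 3" using 3 by (simp add: c_def)
    moreover have "is_walk E c"
      using 3 f orbit_V unfolding is_walk_iff_adj_pairs c_def adj_pairs_map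
      by (auto simp: set_adj_pairs_upt)
    moreover have "{last c, hd c} \<in> E"
    proof -
      have "f ((f ^^ (k - 1)) x) = (f ^^ k) x" using 3 by (cases k) auto
      with x have "f ((f ^^ (k - 1)) x) = x" by simp
      then show ?thesis
        using f[OF orbit_V[of "k - 1"]] x by (simp add: c_def last_map hd_map)
    qed
    ultimately show False using tree_no_cycle[OF tree] by blast
  qed
qed

section \<open>The regular polygon\<close>

definition polygon_vertex :: "nat \<Rightarrow> int \<Rightarrow> pt" where
  "polygon_vertex n j = vector [cos (2 * pi * j / n), sin (2 * pi * j / n)]"

definition regular_polygon :: "nat \<Rightarrow> pt set" where
  "regular_polygon n = polygon_vertex n ` {0..<int n}"

lemma norm_pt: "norm (x :: pt) = sqrt ((x$1)\<^sup>2 + (x$2)\<^sup>2)"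
  by (simp add: norm_vec_def L2_set_def sum_2)

lemma norm_polygon_vertex [simp]: "norm (polygon_vertex n j) = 1"
  by (simp add: norm_pt polygon_vertex_def)

lemma polygon_vertex_eq_iff:
  assumes "n > 0"
  shows "polygon_vertex n a = polygon_vertex n b \<longleftrightarrow> int n dvd a - b"
proof -
  have "polygon_vertex n a = polygon_vertex n b \<longleftrightarrow>
      (\<exists>m::int. 2 * pi * a / n = 2 * pi * b / n + 2 * pi * m)"
    unfolding polygon_vertex_def by (metis vector_2 sin_cos_eq_iff)
  also have "\<dots> \<longleftrightarrow> (\<exists>m::int. a = b + m * int n)"
  proof -
    have "2 * pi * a / n = 2 * pi * b / n + 2 * pi * m \<longleftrightarrow> a = b + m * int n" for m :: int
    proof -
      have "2 * pi * a / n - (2 * pi * b / n + 2 * pi * m) = 2 * pi / n * of_int (a - (b + m * int n))"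
        using assms by (simp add: field_simps)
      then show ?thesis
        unfolding eq_iff_diff_eq_0[of "2 * pi * a / n"] using assms
        by simp (metis of_int_eq_iff of_int_add of_int_mult of_int_of_nat_eq)
    qed
    then show ?thesis by simp
  qed
  also have "\<dots> \<longleftrightarrow> int n dvd a - b"
    by (metis add_diff_cancel_left' diff_add_cancel dvd_def mult.commute)
  finally show ?thesis .
qed

lemma inj_on_polygon_vertex:
  assumes "n > 0"
  shows "inj_on (polygon_vertex n) {a..<a + int n}"
proof (rule inj_onI)
  fix i j assume ij: "i \<in> {a..<a + int n}" "j \<in> {a..<a + int n}"
    and "polygon_vertex n i = polygon_vertex n j"
  then have "int n dvd i - j" using polygon_vertex_eq_iff[OF assms] by simp
  moreover have "\<bar>i - j\<bar> < int n" using ij by auto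
  ultimately show "i = j" using dvd_imp_le_int[of "i - j" "int n"] by fastforce
qed

lemma polygon_vertex_in_regular_polygon:
  assumes "n > 0"
  shows "polygon_vertex n j \<in> regular_polygon n"
proof -
  have "polygon_vertex n j = polygon_vertex n (j mod int n)"
    using assms by (simp add: polygon_vertex_eq_iff minus_mod_eq_mult_div)
  then show ?thesis
    unfolding regular_polygon_def using assms by simp
qed

lemma card_regular_polygon: "n > 0 \<Longrightarrow> card (regular_polygon n) = n"
  unfolding regular_polygon_def using card_image[OF inj_on_polygon_vertex, of n 0] by simp

lemma dist_polygon_vertex_succ:
  assumes "n > 1"
  shows "dist (polygon_vertex n j) (polygon_vertex n (j + 1)) = 2 * sin (pi / n)"
proof -
  let ?a = "2 * pi * j / n" and ?b = "2 * pi * (j + 1) / n"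
  have "(dist (polygon_vertex n j) (polygon_vertex n (j + 1)))\<^sup>2 = (cos ?a - cos ?b)\<^sup>2 + (sin ?a - sin ?b)\<^sup>2"
    by (simp add: dist_norm norm_pt polygon_vertex_def)
  also have "\<dots> = 2 - 2 * cos (?a - ?b)"
    by (simp add: cos_diff power2_eq_square algebra_simps)
  also have "?a - ?b = - (2 * (pi / n))" using assms by (simp add: field_simps)
  also have "2 - 2 * cos (- (2 * (pi / n))) = (2 * sin (pi / n))\<^sup>2"
    using cos_double_sin[of "pi / n"] by (simp add: power2_eq_square)
  finally have "(dist (polygon_vertex n j) (polygon_vertex n (j + 1)))\<^sup>2 = (2 * sin (pi / n))\<^sup>2" .
  moreover have "0 \<le> 2 * sin (pi / n)"
    using assms sin_gt_zero[of "pi / n"] by (simp add: field_simps)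
  ultimately show ?thesis using power2_eq_imp_eq zero_le_dist by blast
qed

lemma polygon_vertex_add_succ:
  assumes "n > 0"
  shows "polygon_vertex n j + polygon_vertex n (j + 1) =
    (2 * cos (pi / n)) *\<^sub>R
      vector [cos ((2 * real_of_int j + 1) * pi / n), sin ((2 * real_of_int j + 1) * pi / n)]"
proof -
  define c where "c = (2 * real_of_int j + 1) * pi / n"
  define d where "d = pi / n"
  have a: "2 * pi * j / n = c - d" and b: "2 * pi * real_of_int (j + 1) / n = c + d"
    unfolding c_def d_def using assms by (simp_all add: field_simps)
  have "polygon_vertex n j + polygon_vertex n (j + 1) =
      vector [cos (c - d) + cos (c + d), sin (c - d) + sin (c + d)]"
    unfolding polygon_vertex_def a b by (simp add: vec_eq_iff forall_2)
  also have "\<dots> = (2 * cos d) *\<^sub>R vector [cos c, sin c]"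
    by (simp add: vec_eq_iff forall_2 cos_add cos_diff sin_add sin_diff)
  finally show ?thesis unfolding c_def d_def .
qed

lemma convex_position_if_norm_1:
  assumes "\<And>p. p \<in> S \<Longrightarrow> norm p = 1"
  shows "convex_position S"
  unfolding convex_position_def
proof
  fix p assume p: "p \<in> S"
  have "convex hull S \<subseteq> cball 0 1"
    by (rule hull_minimal) (auto simp: assms)
  then have "interior (convex hull S) \<subseteq> ball 0 1"
    using interior_mono interior_cball by metis
  then have "p \<notin> interior (convex hull S)"
    using p assms by fastforce
  moreover have "p \<in> closure (convex hull S)"
    using p by (meson closure_subset hull_subset subsetD)
  ultimately show "p \<in> frontier (convex hull S)" unfolding frontier_def by blast
qed

lemma dist_add_dist_ge_2:
  fixes p q x :: "'a :: real_inner"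
  assumes "norm p = 1" "norm q = 1" "inner (p + q) x \<le> 0"
  shows "2 \<le> dist p x + dist x q"
proof -
  have "1 - inner p x \<le> dist p x"
    using norm_cauchy_schwarz[of p "p - x"] assms
    by (simp add: inner_diff_right dist_norm flip: power2_norm_eq_inner)
  moreover have "1 - inner q x \<le> dist x q"
    using norm_cauchy_schwarz[of q "q - x"] assms
    by (simp add: inner_diff_right dist_norm norm_minus_commute flip: power2_norm_eq_inner)
  ultimately show ?thesis using assms by (simp add: inner_add_left)
qed

lemma sin_less_self: "0 < x \<Longrightarrow> sin x < (x :: real)"
proof (cases "x \<le> pi")
  case True
  assume "0 < x"
  have "sin x = 2 * sin (x / 2) * cos (x / 2)" using sin_double[of "x / 2"] by simp
  also have "\<dots> < 2 * sin (x / 2)"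
  proof -
    have "cos (x / 2) < 1" using \<open>0 < x\<close> True cos_monotone_0_pi[of 0 "x / 2"] by simp
    moreover have "0 < 2 * sin (x / 2)" using \<open>0 < x\<close> True by (simp add: sin_gt_zero)
    ultimately show ?thesis using mult_strict_left_mono[of "cos (x / 2)" 1] by fastforce
  qed
  also have "\<dots> \<le> x" using sin_x_le_x[of "x / 2"] \<open>0 < x\<close> by simp
  finally show ?thesis .
next
  case False
  then show ?thesis using sin_le_one[of x] pi_gt3 by linarith
qed

section \<open>Dilation of trees on the regular polygon\<close>

lemma tree_dist_ge_via:
  assumes tree: "is_tree V E" and "u \<in> V" "v \<in> V" and "u \<notin> branch E x v"
  shows "dist u x + dist x v \<le> tree_dist E u v"
  unfolding tree_dist_def
proof (rule cInf_greatest)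
  obtain w where w: "is_walk E w" "hd w = u" "last w = v"
    using tree assms unfolding is_tree_def by blast
  then obtain w' where "is_walk E w'" "distinct w'" "hd w' = u" "last w' = v"
    by (metis is_walk_shortcut)
  then show "{walk_weight p | p. is_walk E p \<and> distinct p \<and> hd p = u \<and> last p = v} \<noteq> {}"
    by blast
next
  fix l assume "l \<in> {walk_weight p | p. is_walk E p \<and> distinct p \<and> hd p = u \<and> last p = v}"
  then obtain p where p: "l = walk_weight p" "is_walk E p" "hd p = u" "last p = v" by blast
  then have "x \<in> set p" using assms(4) unfolding branch_def by blast
  then show "dist u x + dist x v \<le> l" using walk_weight_ge_via p by metis
qed

lemma tree_dist_div_dist_le_dilation:
  assumes "finite S" "u \<in> S" "v \<in> S" "u \<noteq> v"
  shows "tree_dist E u v / dist u v \<le> dilation S E"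
  unfolding dilation_def
proof (rule cSup_upper)
  let ?R = "{tree_dist E u v / dist u v | u v. u \<in> S \<and> v \<in> S \<and> u \<noteq> v}"
  show "tree_dist E u v / dist u v \<in> ?R" using assms by blast
  have "?R \<subseteq> (\<lambda>(u, v). tree_dist E u v / dist u v) ` (S \<times> S)" by auto
  then show "bdd_above ?R"
    using assms(1) by (meson bdd_above_finite finite_SigmaI finite_imageI finite_subset)
qed

lemma trig_combination_nonpos_on_arc:
  fixes a b :: real
  obtains \<phi> where "\<And>\<theta>. \<phi> + pi / 2 \<le> \<theta> \<Longrightarrow> \<theta> \<le> \<phi> + 3 * pi / 2 \<Longrightarrow> a * cos \<theta> + b * sin \<theta> \<le> 0"
proof -
  define r where "r = sqrt (a\<^sup>2 + b\<^sup>2)"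
  obtain \<phi> where ab: "a = r * cos \<phi>" "b = r * sin \<phi>"
  proof (cases "r = 0")
    case True
    then show thesis using that[of 0] by (simp add: r_def)
  next
    case False
    then have "(a / r)\<^sup>2 + (b / r)\<^sup>2 = 1"
      by (simp add: r_def power_divide add_divide_distrib[symmetric])
    then obtain t where "a / r = cos t" "b / r = sin t"
      using sincos_total_2pi by metis
    then show thesis using that[of t] False by (simp add: field_simps)
  qed
  have "a * cos \<theta> + b * sin \<theta> \<le> 0" if "\<phi> + pi / 2 \<le> \<theta>" "\<theta> \<le> \<phi> + 3 * pi / 2" for \<theta>
  proof -
    have "0 \<le> cos (\<theta> - \<phi> - pi)" using that by (intro cos_ge_zero) auto
    then have "cos (\<theta> - \<phi>) \<le> 0" by (simp add: cos_diff)
    moreover have "a * cos \<theta> + b * sin \<theta> = r * cos (\<theta> - \<phi>)"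
      unfolding ab cos_diff by (simp add: algebra_simps)
    ultimately show ?thesis by (simp add: r_def mult_nonneg_nonpos)
  qed
  then show thesis by (rule that)
qed

(* j is the least integer with (2 j + 1) pi / n >= phi + pi / 2; the angles (2 i + 1) pi / n
   for i = j, ..., j + n div 2 - 1 then stay within the half-turn. *)
lemma window_meets_arc:
  assumes "n > 0" and window: "\<And>j. \<exists>t<n div 2. j + int t \<in> B"
  shows "\<exists>i\<in>B. \<phi> + pi / 2 \<le> (2 * real_of_int i + 1) * pi / n \<and>
    (2 * real_of_int i + 1) * pi / n \<le> \<phi> + 3 * pi / 2"
proof -
  define s where "s = (\<phi> + pi / 2) * n / pi"
  define j where "j = \<lceil>(s - 1) / 2\<rceil>"
  obtain t where t: "t < n div 2" "j + int t \<in> B" using window by blast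
  define i where "i = j + int t"
  have "i \<in> B" using t(2) by (simp add: i_def)
  have "2 * real t + 2 \<le> real n" using t(1) by linarith
  moreover have "real_of_int i = of_int j + real t" by (simp add: i_def)
  moreover have "(s - 1) / 2 \<le> of_int j" "of_int j - 1 < (s - 1) / 2"
    using ceiling_correct[of "(s - 1) / 2"] unfolding j_def by simp_all
  ultimately have "s \<le> 2 * real_of_int i + 1" and "2 * real_of_int i + 1 \<le> s + n"
    by auto
  then have "s * pi / n \<le> (2 * real_of_int i + 1) * pi / n"
    "(2 * real_of_int i + 1) * pi / n \<le> (s + n) * pi / n"
    by (simp_all add: divide_right_mono)
  moreover have "s * pi / n = \<phi> + pi / 2" "(s + n) * pi / n = \<phi> + 3 * pi / 2"
    unfolding s_def using assms(1) by (simp_all add: field_simps)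
  ultimately show ?thesis using \<open>i \<in> B\<close> by auto
qed

(* Otherwise the n div 2 + 1 consecutive vertices from p_j on would all lie in one branch. *)
lemma regular_polygon_side_separated:
  assumes "n > 1"
    and balanced: "\<And>p. p \<in> regular_polygon n \<Longrightarrow> 2 * card (regular_polygon n \<inter> branch E x p) \<le> n"
  shows "\<exists>t<n div 2. polygon_vertex n (j + int t) \<notin> branch E x (polygon_vertex n (j + int t + 1))"
proof (rule ccontr)
  let ?P = "polygon_vertex n" and ?k = "n div 2"
  assume "\<not> ?thesis"
  then have step: "?P (j + int t) \<in> branch E x (?P (j + int t + 1))" if "t < ?k" for t
    using that by blast
  have in_branch: "?P (j + int t) \<in> branch E x (?P j)" if "t \<le> ?k" for t
    using that
  proof (induction t)
    case 0
    have "?P j \<in> branch E x (?P (j + 1))" using step[of 0] assms(1) by simp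
    then have "?P j \<in> branch E x (?P j)" using branch_trans branch_sym by blast
    then show ?case by simp
  next
    case (Suc t)
    then have "?P (j + int t + 1) \<in> branch E x (?P (j + int t))"
      using step[of t] branch_sym by simp
    then have "?P (j + int t + 1) \<in> branch E x (?P j)"
      using Suc branch_trans by simp
    moreover have "j + int (Suc t) = j + int t + 1" by simp
    ultimately show ?case by (simp only:)
  qed
  have "?P ` {j..j + int ?k} \<subseteq> regular_polygon n \<inter> branch E x (?P j)"
  proof
    fix p assume "p \<in> ?P ` {j..j + int ?k}"
    then obtain i where "i \<in> {j..j + int ?k}" "p = ?P i" by blast
    then obtain t where "t \<le> ?k" "p = ?P (j + int t)"
      by (intro that[of "nat (i - j)"]) auto
    then show "p \<in> regular_polygon n \<inter> branch E x (?P j)"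
      using in_branch polygon_vertex_in_regular_polygon assms(1) by simp
  qed
  moreover have "inj_on ?P {j..<j + int n}" using inj_on_polygon_vertex assms(1) by simp
  then have "inj_on ?P {j..j + int ?k}" by (rule inj_on_subset) (use assms(1) in auto)
  then have "card (?P ` {j..j + int ?k}) = ?k + 1" by (simp add: card_image)
  moreover have "finite (regular_polygon n \<inter> branch E x (?P j))"
    by (simp add: regular_polygon_def)
  ultimately have "?k + 1 \<le> card (regular_polygon n \<inter> branch E x (?P j))"
    by (metis card_mono)
  moreover have "2 * card (regular_polygon n \<inter> branch E x (?P j)) \<le> n"
    using balanced polygon_vertex_in_regular_polygon assms(1) by simp
  ultimately show False by linarith
qed

lemma regular_polygon_far_side:
  assumes n: "n > 1"
    and balanced: "\<And>p. p \<in> regular_polygon n \<Longrightarrow> 2 * card (regular_polygon n \<inter> branch E x p) \<le> n"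
  obtains i where "polygon_vertex n i \<notin> branch E x (polygon_vertex n (i + 1))"
    and "2 \<le> dist (polygon_vertex n i) x + dist x (polygon_vertex n (i + 1))"
proof -
  let ?P = "polygon_vertex n"
  define B where "B = {j. ?P j \<notin> branch E x (?P (j + 1))}"
  have "\<exists>t<n div 2. j + int t \<in> B" for j
    using regular_polygon_side_separated[OF n balanced, of j] unfolding B_def by (simp add: add.assoc)
  moreover obtain \<phi> where
    "\<And>\<theta>. \<phi> + pi / 2 \<le> \<theta> \<Longrightarrow> \<theta> \<le> \<phi> + 3 * pi / 2 \<Longrightarrow> x$1 * cos \<theta> + x$2 * sin \<theta> \<le> 0"
    using trig_combination_nonpos_on_arc[of "x$1" "x$2"] by blast
  ultimately obtain i where "i \<in> B"
    and "x$1 * cos ((2 * real_of_int i + 1) * pi / n) + x$2 * sin ((2 * real_of_int i + 1) * pi / n) \<le> 0"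
    using window_meets_arc[of n B \<phi>] n by fastforce
  moreover have "0 \<le> cos (pi / n)"
  proof (rule cos_ge_zero)
    show "pi / n \<le> pi / 2" using n by (intro divide_left_mono) auto
    show "- (pi / 2) \<le> pi / n" using pi_gt_zero divide_nonneg_nonneg[of pi n] by linarith
  qed
  moreover have "inner (?P i + ?P (i + 1)) x = 2 * cos (pi / n) *
      (x$1 * cos ((2 * real_of_int i + 1) * pi / n) + x$2 * sin ((2 * real_of_int i + 1) * pi / n))"
    using n by (subst polygon_vertex_add_succ) (simp_all add: inner_vec_def sum_2 algebra_simps)
  ultimately have "inner (?P i + ?P (i + 1)) x \<le> 0" by (simp add: mult_nonneg_nonpos)
  then have "2 \<le> dist (?P i) x + dist x (?P (i + 1))" by (simp add: dist_add_dist_ge_2)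
  with \<open>i \<in> B\<close> show thesis unfolding B_def by (intro that) auto
qed

lemma dilation_regular_polygon_ge:
  assumes n: "n > 1" and "steiner_tree (regular_polygon n) V E"
  shows "1 / sin (pi / n) \<le> dilation (regular_polygon n) E"
proof -
  let ?S = "regular_polygon n" and ?P = "polygon_vertex n"
  have tree: "is_tree V E" and "?S \<subseteq> V" using assms(2) unfolding steiner_tree_def by auto
  obtain x where "\<forall>p\<in>V. 2 * card (?S \<inter> branch E x p) \<le> n"
    using tree_centroid[OF tree \<open>?S \<subseteq> V\<close>] card_regular_polygon n by auto
  then have "2 * card (?S \<inter> branch E x p) \<le> n" if "p \<in> ?S" for p
    using that \<open>?S \<subseteq> V\<close> by blast
  then obtain i where separated: "?P i \<notin> branch E x (?P (i + 1))"
    and detour: "2 \<le> dist (?P i) x + dist x (?P (i + 1))"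
    by (rule regular_polygon_far_side[OF n])
  have ends: "?P i \<in> ?S" "?P (i + 1) \<in> ?S" using polygon_vertex_in_regular_polygon n by simp_all
  have side: "dist (?P i) (?P (i + 1)) = 2 * sin (pi / n)" using dist_polygon_vertex_succ n .
  have "0 < sin (pi / n)" using n by (intro sin_gt_zero) (auto simp: field_simps)
  moreover have "2 \<le> tree_dist E (?P i) (?P (i + 1))"
    using detour tree_dist_ge_via[OF tree _ _ separated] ends \<open>?S \<subseteq> V\<close> by (meson order.trans subsetD)
  ultimately have "1 / sin (pi / n) \<le> tree_dist E (?P i) (?P (i + 1)) / dist (?P i) (?P (i + 1))"
    unfolding side by (simp add: field_simps)
  also have "\<dots> \<le> dilation ?S E"
  proof (rule tree_dist_div_dist_le_dilation[OF _ ends])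
    show "finite ?S" by (simp add: regular_polygon_def)
    show "?P i \<noteq> ?P (i + 1)" using side \<open>0 < sin (pi / n)\<close> by auto
  qed
  finally show ?thesis .
qed

theorem theorem1:
  fixes n :: nat
  assumes "n > 1"
  shows "\<exists>S :: pt set. finite S \<and> card S = n \<and> convex_position S \<and>
           (\<forall>V E. steiner_tree S V E \<longrightarrow> dilation S E \<ge> 1 / sin (pi / real n)) \<and>
           1 / sin (pi / real n) > real n / pi"
proof (intro exI conjI allI impI)
  show "finite (regular_polygon n)" by (simp add: regular_polygon_def)
  show "card (regular_polygon n) = n" using assms by (simp add: card_regular_polygon)
  show "convex_position (regular_polygon n)"
    by (rule convex_position_if_norm_1) (auto simp: regular_polygon_def)
  show "1 / sin (pi / n) \<le> dilation (regular_polygon n) E" if "steiner_tree (regular_polygon n) V E" for V E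
    using dilation_regular_polygon_ge assms that .
  have "0 < sin (pi / n)" using assms by (intro sin_gt_zero) (auto simp: field_simps)
  have "sin (pi / n) < pi / n" using assms by (intro sin_less_self) simp
  have "real n * sin (pi / n) < real n * (pi / n)"
    using \<open>sin (pi / n) < pi / n\<close> assms by (intro mult_strict_left_mono) auto
  also have "\<dots> = pi" using assms by simp
  finally show "real n / pi < 1 / sin (pi / n)"
    using \<open>0 < sin (pi / n)\<close> by (simp add: field_simps)
qed

end
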